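(* Take $R=\mathbb{F}_2$, $F=\hat{\mathbb{G}}_a$, $G=\hat{\mathbb{G}}_m$ in the tangent spectral sequence $H^*(\hat{\mathbb{G}}_a;\hat{\mathbb{G}}_a)(R)\Rightarrow H^*(\hat{\mathbb{G}}_a;\hat{\mathbb{G}}_m)(R)$, let $i\neq j$ and let $c$ be a coefficient. Then \[ d_{2^i+2^j}(c\,a_ia_j) = c^2\,(a_i^2a_{j+1}-a_{i+1}a_j^2). \]
   Context: $\hat{\mathbb{G}}_a$ is the formal group law $x+y$ and $\hat{\mathbb{G}}_m$ the formal group law $x+y+xy$ (equivalently $(1+x)(1+y)$). Lubin–Tate cochains $A^n(F;G)(R)$ are power series in $n$ variables with zero constant term with the alternating coboundary built from the group laws; $H^*(F;G)(R)$ is the cohomology. The tangent spectral sequence is the spectral sequence of the filtration of these cochains by leading total degree; its $E_1$-term is $H^*(\hat{\mathbb{G}}_a;\hat{\mathbb{G}}_a)(R)$, graded by the homogeneous degree of representing polynomials, and it converges to $H^*(\hat{\mathbb{G}}_a;\hat{\mathbb{G}}_m)(R)$; $d_r$ is the differential on the $E_r$-page. Over $\mathbb{F}_2$, $H^*(\hat{\mathbb{G}}_a;\hat{\mathbb{G}}_a)(\mathbb{F}_2)$ is the polynomial algebra on classes $a_i\in H^1$ represented by $x^{2^i}$; the product $a_ia_j\in H^2$ is represented by $x^{2^i}y^{2^j}$, and similarly for cubic monomials in three variables. *)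

theory Defs
  imports Main "HOL-Library.Z2"
begin

text \<open>Formal power series in the variables x_0, x_1, ... over a commutative ring.
  A monomial is an exponent function (nat => nat); a series is its coefficient function.\<close>

type_synonym mono = "nat \<Rightarrow> nat"
type_synonym 'a pser = "mono \<Rightarrow> 'a"

definition mdeg :: "mono \<Rightarrow> nat" where
  "mdeg m = (\<Sum>k\<in>{k. m k \<noteq> 0}. m k)"

definition in_vars :: "nat \<Rightarrow> ('a::zero) pser \<Rightarrow> bool" where
  "in_vars n f \<longleftrightarrow> (\<forall>m. f m \<noteq> 0 \<longrightarrow> (\<forall>k\<ge>n. m k = 0))"

definition cochain :: "nat \<Rightarrow> ('a::zero) pser \<Rightarrow> bool" where
  "cochain n f \<longleftrightarrow> in_vars n f \<and> f (\<lambda>_. 0) = 0"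

definition ps_one :: "('a::{zero,one}) pser" where
  "ps_one m = (if m = (\<lambda>_. 0) then 1 else 0)"

definition ps_mult :: "('a::comm_ring_1) pser \<Rightarrow> 'a pser \<Rightarrow> 'a pser" where
  "ps_mult f g m = (\<Sum>p\<in>{p. \<forall>k. p k \<le> m k}. f p * g (\<lambda>k. m k - p k))"

primrec ps_pow :: "('a::comm_ring_1) pser \<Rightarrow> nat \<Rightarrow> 'a pser" where
  "ps_pow f 0 = ps_one"
| "ps_pow f (Suc k) = ps_mult f (ps_pow f k)"

text \<open>The multiplicative formal group law G_m(u,v) = u + v + uv, and its formal inverse
  [-1](u) = (1+u)^{-1} - 1 = sum_{k>=1} (-u)^k (for u with zero constant term).\<close>
definition gm_add :: "('a::comm_ring_1) pser \<Rightarrow> 'a pser \<Rightarrow> 'a pser" where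
  "gm_add f g = (\<lambda>m. f m + g m + ps_mult f g m)"

definition gm_neg :: "('a::comm_ring_1) pser \<Rightarrow> 'a pser" where
  "gm_neg f = (\<lambda>m. \<Sum>k\<in>{1..mdeg m}. (- 1) ^ k * ps_pow f k m)"

text \<open>Face maps for F = G_a: for an n-cochain f, the (n+1)-variable series
  face 0 = f(x_1,...,x_n), face i = f(x_0,...,x_{i-1} +_F x_i,...,x_n) (1 <= i <= n),
  face (n+1) = f(x_0,...,x_{n-1}); with x +_F y = x + y (binomial expansion).\<close>
definition face :: "nat \<Rightarrow> nat \<Rightarrow> ('a::comm_ring_1) pser \<Rightarrow> 'a pser" where
  "face n i f = (\<lambda>m.
     if i = 0 then (if m 0 = 0 then f (\<lambda>k. m (Suc k)) else 0)
     else if i \<le> n then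
       of_nat ((m (i - 1) + m i) choose (m i)) *
       f (\<lambda>k. if k < i - 1 then m k else if k = i - 1 then m (i - 1) + m i else m (Suc k))
     else (if m n = 0 then f m else 0))"

definition cob :: "nat \<Rightarrow> ('a::comm_ring_1) pser \<Rightarrow> 'a pser" where
  "cob n f = foldr gm_add
     (map (\<lambda>i. if even i then face n i f else gm_neg (face n i f)) [0..<n + 2]) (\<lambda>_. 0)"

definition fil :: "nat \<Rightarrow> ('a::zero) pser \<Rightarrow> bool" where
  "fil s f \<longleftrightarrow> (\<forall>m. f m \<noteq> 0 \<longrightarrow> s \<le> mdeg m)"

definition hcomp :: "nat \<Rightarrow> ('a::zero) pser \<Rightarrow> 'a pser" where
  "hcomp d f = (\<lambda>m. if mdeg m = d then f m else 0)"

definition Zr :: "nat \<Rightarrow> nat \<Rightarrow> nat \<Rightarrow> ('a::comm_ring_1) pser \<Rightarrow> bool" where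
  "Zr n r s f \<longleftrightarrow> cochain n f \<and> fil s f \<and> fil (s + r) (cob n f)"

text \<open>Tangent spectral sequence, E_r^s = Z_r^s / (Z_{r-1}^{s+1} + d Z_{r-1}^{s-r+1}).
  tss_d n r s x y: for x a homogeneous degree-s representative (in cochain degree n) and
  y a homogeneous degree-(s+r) representative (in cochain degree n+1),
  x survives to E_r, y survives to E_r, and d_r [x] = [y] in E_r.\<close>
definition tss_d :: "nat \<Rightarrow> nat \<Rightarrow> nat \<Rightarrow> ('a::comm_ring_1) pser \<Rightarrow> 'a pser \<Rightarrow> bool" where
  "tss_d n r s x y \<longleftrightarrow>
     (\<exists>f y' u v. Zr n r s f \<and> hcomp s f = x \<and>
        Zr (Suc n) r (s + r) y' \<and> hcomp (s + r) y' = y \<and>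
        Zr (Suc n) (r - 1) (s + r + 1) u \<and> Zr n (r - 1) (s + 1) v \<and>
        cob n f = gm_add y' (gm_add u (cob n v)))"

definition monom :: "'a::zero \<Rightarrow> nat list \<Rightarrow> 'a pser" where
  "monom c e = (\<lambda>m. if m = (\<lambda>k. if k < length e then e ! k else 0) then c else 0)"

end

theory Submission
  imports Defs "HOL-Library.FuncSet" "HOL-Library.Function_Algebras"
begin

text \<open>
  Let \<open>s = 2\<^sup>i + 2\<^sup>j\<close> and \<open>x = c x\<^sub>0\<^bsup>2\<^sup>i\<^esup> x\<^sub>1\<^bsup>2\<^sup>j\<^esup>\<close>. Since \<open>(2\<^sup>a choose t)\<close> is even
  for \<open>0 < t < 2\<^sup>a\<close>, the faces of a monomial with power-of-two exponents are sums of at most two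
  monomials, and their alternating sum (the additive coboundary) vanishes over \<open>F\<^sub>2\<close>. Expanding
  the \<open>G\<^sub>m\<close>-sum of the faces and \<open>[-1](u) = -u + u\<^sup>2 - \<dots>\<close> to second order therefore gives
  \<open>cob x \<equiv> y\<close> modulo degree \<open>3s\<close>, where \<open>y\<close> collects the squares of the odd faces and the
  pairwise products of all faces; it equals \<open>c\<^sup>2 (a\<^sub>i\<^sup>2 a\<^sub>j\<^sub>+\<^sub>1 - a\<^sub>i\<^sub>+\<^sub>1 a\<^sub>j\<^sup>2)\<close>.
  The monomials of \<open>y\<close> again have power-of-two exponents, so \<open>cob y\<close> starts in degree \<open>4s\<close>.
  Finally \<open>cob x = y +\<^sub>G u\<close> is solved for \<open>u\<close> of degree \<open>\<ge> 3s\<close> by iterating a contraction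
  of the degree filtration, which exhibits \<open>d\<^sub>s [x] = [y]\<close>.
\<close>

section \<open>Support, degree and products of series\<close>

definition finite_support :: "mono \<Rightarrow> bool" where
  "finite_support m \<longleftrightarrow> finite {k. m k \<noteq> 0}"

lemma finite_dominated_monos_iff:
  "finite {p :: mono. \<forall>k. p k \<le> m k} \<longleftrightarrow> finite_support m"
proof
  assume fin: "finite {p :: mono. \<forall>k. p k \<le> m k}"
  define unit :: "nat \<Rightarrow> mono" where "unit k = (\<lambda>j. if j = k then 1 else 0)" for k
  have "unit ` {k. m k \<noteq> 0} \<subseteq> {p. \<forall>k. p k \<le> m k}" by (auto simp: unit_def)
  hence "finite (unit ` {k. m k \<noteq> 0})" using fin by (rule finite_subset)
  moreover have "inj_on unit {k. m k \<noteq> 0}" by (auto simp: inj_on_def unit_def fun_eq_iff)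
  ultimately show "finite_support m" unfolding finite_support_def by (rule finite_imageD)
next
  assume "finite_support m"
  let ?S = "{k. m k \<noteq> 0}"
  let ?ext = "\<lambda>g k. if k \<in> ?S then g k else 0"
  have "{p :: mono. \<forall>k. p k \<le> m k} \<subseteq> ?ext ` PiE ?S (\<lambda>k. {..m k})"
  proof
    fix p :: mono assume p: "p \<in> {p. \<forall>k. p k \<le> m k}"
    have "p = ?ext (restrict p ?S)"
    proof
      fix k show "p k = ?ext (restrict p ?S) k" using p[simplified, rule_format, of k] by auto
    qed
    moreover have "restrict p ?S \<in> PiE ?S (\<lambda>k. {..m k})" using p by auto
    ultimately show "p \<in> ?ext ` PiE ?S (\<lambda>k. {..m k})" by blast
  qed
  moreover have "finite (PiE ?S (\<lambda>k. {..m k}))"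
    using \<open>finite_support m\<close> unfolding finite_support_def by (intro finite_PiE) auto
  ultimately show "finite {p :: mono. \<forall>k. p k \<le> m k}" using finite_subset by blast
qed

lemma finite_support_mono: "finite_support m \<Longrightarrow> (\<And>k. p k \<le> m k) \<Longrightarrow> finite_support p"
  unfolding finite_support_def by (rule finite_subset[rotated]) (auto intro: less_le_trans)

lemma mdeg_eq_sum:
  assumes "finite S" "\<And>k. k \<notin> S \<Longrightarrow> m k = 0" shows "mdeg m = sum m S"
  unfolding mdeg_def using assms by (intro sum.mono_neutral_left) (auto, metis less_irrefl)

lemma mdeg_lessThan: "(\<And>k. N \<le> k \<Longrightarrow> m k = 0) \<Longrightarrow> mdeg m = sum m {..<N}"
  by (rule mdeg_eq_sum) auto

lemma mdeg_infinite_support: "\<not> finite_support m \<Longrightarrow> mdeg m = 0"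
  by (simp add: mdeg_def finite_support_def)

lemma mdeg_add:
  assumes "finite_support p" "finite_support q" shows "mdeg (p + q) = mdeg p + mdeg q"
proof -
  let ?S = "{k. p k \<noteq> 0} \<union> {k. q k \<noteq> 0}"
  have "finite ?S" using assms by (simp add: finite_support_def)
  have "mdeg (p + q) = sum (p + q) ?S" by (rule mdeg_eq_sum) (use \<open>finite ?S\<close> in auto)
  moreover have "mdeg p = sum p ?S" "mdeg q = sum q ?S" by (rule mdeg_eq_sum; use \<open>finite ?S\<close> in auto)+
  ultimately show ?thesis by (simp add: sum.distrib)
qed

lemma ps_mult_nonzeroE:
  assumes "ps_mult f g m \<noteq> 0"
  obtains p q where "m = p + q" "finite_support p" "finite_support q" "f p \<noteq> 0" "g q \<noteq> 0"
proof -
  have "finite {p :: mono. \<forall>k. p k \<le> m k}"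
    using assms unfolding ps_mult_def by (meson sum.infinite)
  hence fin: "finite_support m" by (simp add: finite_dominated_monos_iff)
  obtain p where p: "\<forall>k. p k \<le> m k" "f p * g (\<lambda>k. m k - p k) \<noteq> 0"
    using assms unfolding ps_mult_def by (metis (mono_tags, lifting) mem_Collect_eq sum.neutral)
  show thesis
  proof
    show "m = p + (m - p)" using p(1) by (simp add: fun_eq_iff)
    show "finite_support p" "finite_support (m - p)" using fin p(1) by (auto intro: finite_support_mono)
    show "f p \<noteq> 0" "g (m - p) \<noteq> 0" using p(2) by (auto simp: fun_diff_def)
  qed
qed

lemma ps_mult_add_left: "ps_mult (f + g) h = ps_mult f h + ps_mult g h"
  by (simp add: ps_mult_def fun_eq_iff sum.distrib distrib_right)

lemma ps_mult_add_right: "ps_mult h (f + g) = ps_mult h f + ps_mult h g"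
  by (simp add: ps_mult_def fun_eq_iff sum.distrib distrib_left)

lemma ps_mult_diff_left: "ps_mult (f - g) h = ps_mult f h - ps_mult g h"
  by (simp add: ps_mult_def fun_eq_iff sum_subtractf left_diff_distrib)

lemma ps_mult_diff_right: "ps_mult h (f - g) = ps_mult h f - ps_mult h g"
  by (simp add: ps_mult_def fun_eq_iff sum_subtractf right_diff_distrib)

lemma ps_mult_zero_left [simp]: "ps_mult 0 h = 0"
  by (simp add: ps_mult_def fun_eq_iff)

lemma ps_mult_zero_right [simp]: "ps_mult h 0 = 0"
  by (simp add: ps_mult_def fun_eq_iff)

lemma ps_mult_ps_one_right:
  assumes "\<And>m. \<not> finite_support m \<Longrightarrow> f m = 0" shows "ps_mult f ps_one = f"
proof
  fix m
  show "ps_mult f ps_one m = f m"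
  proof (cases "finite_support m")
    case True
    have "(\<lambda>k. m k - p k) = (\<lambda>_. 0) \<longleftrightarrow> p = m" if "\<forall>k. p k \<le> m k" for p :: mono
      using that by (auto simp: fun_eq_iff intro: le_antisym)
    hence "ps_mult f ps_one m = (\<Sum>p\<in>{p. \<forall>k. p k \<le> m k}. if p = m then f p else 0)"
      unfolding ps_mult_def ps_one_def by (intro sum.cong) auto
    also have "\<dots> = f m" using True by (simp add: finite_dominated_monos_iff)
    finally show ?thesis .
  next
    case False
    thus ?thesis using assms by (simp add: ps_mult_def finite_dominated_monos_iff)
  qed
qed

section \<open>The degree filtration\<close>

lemma fil_mono: "fil b f \<Longrightarrow> a \<le> b \<Longrightarrow> fil a f"
  unfolding fil_def by force

lemma fil_add: "fil a f \<Longrightarrow> fil a g \<Longrightarrow> fil a (f + g :: 'a::monoid_add pser)"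
  unfolding fil_def by (metis add.right_neutral plus_fun_apply)

lemma fil_uminus: "fil a f \<Longrightarrow> fil a (- f :: 'a::group_add pser)"
  unfolding fil_def by (simp add: fun_Compl_def)

lemma fil_diff: "fil a f \<Longrightarrow> fil a g \<Longrightarrow> fil a (f - g :: 'a::group_add pser)"
  using fil_add[of a f "- g"] fil_uminus by auto

lemma fil_zero [simp]: "fil a 0"
  by (simp add: fil_def)

lemma fil_0 [simp]: "fil 0 f"
  by (simp add: fil_def)

lemma fil_imp_zero: "fil (Suc (mdeg m)) f \<Longrightarrow> f m = 0"
  unfolding fil_def by force

lemma fil_Suc_infinite_support: "fil (Suc a) f \<Longrightarrow> \<not> finite_support m \<Longrightarrow> f m = 0"
  unfolding fil_def using mdeg_infinite_support by force

lemma fil_sum_list: "(\<And>t. t \<in> set ts \<Longrightarrow> fil a t) \<Longrightarrow> fil a (sum_list ts :: 'a::monoid_add pser)"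
  by (induction ts) (auto intro: fil_add)

lemma fil_mult:
  assumes "fil a f" "fil b g" shows "fil (a + b) (ps_mult f g)"
  unfolding fil_def
proof (intro allI impI)
  fix m assume "ps_mult f g m \<noteq> 0"
  then obtain p q where "m = p + q" "finite_support p" "finite_support q" "f p \<noteq> 0" "g q \<noteq> 0"
    by (rule ps_mult_nonzeroE)
  thus "a + b \<le> mdeg m" using assms by (simp add: mdeg_add fil_def add_le_mono)
qed

lemma fil_pow: "fil a f \<Longrightarrow> fil (k * a) (ps_pow f k)"
  by (induction k) (auto dest: fil_mult)

lemma in_vars_mult:
  assumes "in_vars n f" "in_vars n g" shows "in_vars n (ps_mult f g)"
  unfolding in_vars_def
proof (intro allI impI)
  fix m k assume "ps_mult f g m \<noteq> 0" "n \<le> k"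
  then obtain p q where "m = p + q" "f p \<noteq> 0" "g q \<noteq> 0" by (metis ps_mult_nonzeroE)
  thus "m k = 0" using assms \<open>n \<le> k\<close> by (simp add: in_vars_def)
qed

lemma in_vars_pow: "in_vars n f \<Longrightarrow> in_vars n (ps_pow f k)"
proof (induction k)
  case 0 show ?case by (simp add: in_vars_def ps_one_def)
qed (simp add: in_vars_mult)

lemma in_vars_add: "in_vars n f \<Longrightarrow> in_vars n g \<Longrightarrow> in_vars n (f + g :: 'a::monoid_add pser)"
  unfolding in_vars_def by (metis add.right_neutral plus_fun_apply)

lemma in_vars_uminus: "in_vars n f \<Longrightarrow> in_vars n (- f :: 'a::group_add pser)"
  unfolding in_vars_def by (simp add: fun_Compl_def)

lemma in_vars_zero [simp]: "in_vars n 0"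
  by (simp add: in_vars_def)

lemma in_vars_diff: "in_vars n f \<Longrightarrow> in_vars n g \<Longrightarrow> in_vars n (f - g :: 'a::group_add pser)"
  using in_vars_add[of n f "- g"] in_vars_uminus by auto

definition homogeneous :: "nat \<Rightarrow> ('a::zero) pser \<Rightarrow> bool" where
  "homogeneous d f \<longleftrightarrow> (\<forall>m. f m \<noteq> 0 \<longrightarrow> mdeg m = d)"

lemma homogeneous_add: "homogeneous d f \<Longrightarrow> homogeneous d g \<Longrightarrow> homogeneous d (f + g :: 'a::monoid_add pser)"
  unfolding homogeneous_def by (metis add.right_neutral plus_fun_apply)

lemma fil_homogeneous: "homogeneous d f \<Longrightarrow> fil d f"
  by (simp add: homogeneous_def fil_def)

lemma hcomp_homogeneous: "homogeneous d f \<Longrightarrow> hcomp d f = f"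
  by (auto simp: homogeneous_def hcomp_def fun_eq_iff)

lemma fil_contraction_fixpoint:
  fixes \<Phi> :: "('a::ab_group_add) pser \<Rightarrow> 'a pser"
  assumes contr: "\<And>g h k. fil k (g - h) \<Longrightarrow> fil (Suc k) (\<Phi> g - \<Phi> h)"
    and closed: "\<And>g. \<forall>m. g m \<noteq> 0 \<longrightarrow> m \<in> S \<Longrightarrow> \<forall>m. \<Phi> g m \<noteq> 0 \<longrightarrow> m \<in> S"
  shows "\<exists>u. \<Phi> u = u \<and> (\<forall>m. u m \<noteq> 0 \<longrightarrow> m \<in> S)"
proof -
  define it where "it k = (\<Phi> ^^ k) 0" for k
  have it_Suc: "it (Suc k) = \<Phi> (it k)" for k by (simp add: it_def)
  have consecutive: "fil k (it (Suc k) - it k)" for k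
  proof (induction k)
    case (Suc k) show ?case unfolding it_Suc[of "Suc k"] it_Suc[of k] by (rule contr[OF Suc[unfolded it_Suc]])
  qed simp
  have cauchy: "fil k (it j - it k)" if "k \<le> j" for j k
    using that
  proof (induction j rule: dec_induct)
    case (step j)
    have "fil k (it (Suc j) - it j)" by (rule fil_mono[OF consecutive]) (use step.hyps in simp)
    hence "fil k ((it (Suc j) - it j) + (it j - it k))" using step.IH by (rule fil_add)
    thus "fil k (it (Suc j) - it k)" by simp
  qed (simp add: zero_fun_def[symmetric])
  \<comment> \<open>the coefficient at \<open>m\<close> no longer changes after iterate \<open>mdeg m + 1\<close>\<close>
  define u where "u m = it (Suc (mdeg m)) m" for m
  have limit: "fil k (u - it k)" for k
    unfolding fil_def
  proof (intro allI impI, rule ccontr)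
    fix m assume "(u - it k) m \<noteq> 0" and "\<not> k \<le> mdeg m"
    moreover have "fil (Suc (mdeg m)) (it k - it (Suc (mdeg m)))" using \<open>\<not> k \<le> mdeg m\<close> by (intro cauchy) simp
    ultimately show False using fil_imp_zero[of m "it k - it (Suc (mdeg m))"] by (simp add: u_def)
  qed
  have "\<Phi> u m = u m" for m
    using fil_imp_zero[OF contr[OF limit[of "mdeg m"]]] by (simp add: u_def it_Suc)
  moreover have "\<forall>m. it k m \<noteq> 0 \<longrightarrow> m \<in> S" for k
    by (induction k) (simp_all add: it_def closed)
  hence "\<forall>m. u m \<noteq> 0 \<longrightarrow> m \<in> S" by (simp add: u_def)
  ultimately show ?thesis by blast
qed

section \<open>The multiplicative formal group law\<close>

lemma gm_add_eq: "gm_add f g = f + g + ps_mult f g"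
  by (simp add: gm_add_def fun_eq_iff)

lemma fil_gm_add: "fil a f \<Longrightarrow> fil a g \<Longrightarrow> fil a (gm_add f g)"
  unfolding gm_add_eq by (intro fil_add) (auto intro: fil_mono[OF fil_mult])

lemma in_vars_gm_add: "in_vars n f \<Longrightarrow> in_vars n g \<Longrightarrow> in_vars n (gm_add f g)"
  unfolding gm_add_eq by (intro in_vars_add in_vars_mult)

lemma gm_neg_nonzeroE:
  assumes "gm_neg f m \<noteq> 0"
  obtains k where "1 \<le> k" "ps_pow f k m \<noteq> 0"
  using assms unfolding gm_neg_def by (metis (no_types, lifting) atLeastAtMost_iff mult_zero_right sum.neutral)

lemma fil_gm_neg:
  assumes "fil a f" shows "fil a (gm_neg f)"
  unfolding fil_def
proof (intro allI impI)
  fix m assume "gm_neg f m \<noteq> 0"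
  then obtain k where "1 \<le> k" "ps_pow f k m \<noteq> 0" by (rule gm_neg_nonzeroE)
  moreover have "fil (k * a) (ps_pow f k)" using assms by (rule fil_pow)
  ultimately have "k * a \<le> mdeg m" by (simp add: fil_def)
  moreover have "a \<le> k * a" using \<open>1 \<le> k\<close> by simp
  ultimately show "a \<le> mdeg m" by linarith
qed

lemma in_vars_gm_neg:
  assumes "in_vars n f" shows "in_vars n (gm_neg f)"
  unfolding in_vars_def
proof (intro allI impI)
  fix m k assume "gm_neg f m \<noteq> 0" "n \<le> k"
  then obtain l where "ps_pow f l m \<noteq> 0" by (metis gm_neg_nonzeroE)
  thus "m k = 0" using in_vars_pow[OF assms, of l] \<open>n \<le> k\<close> by (simp add: in_vars_def)
qed

lemma gm_neg_quadratic:
  assumes f: "fil a f" and "0 < a"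
  shows "fil (3 * a) (gm_neg f - (ps_mult f f - f))"
  unfolding fil_def
proof (intro allI impI, rule ccontr)
  fix m assume ne: "(gm_neg f - (ps_mult f f - f)) m \<noteq> 0" and lt: "\<not> 3 * a \<le> mdeg m"
  obtain b where a: "a = Suc b" using \<open>0 < a\<close> gr0_implies_Suc by blast
  have high: "ps_pow f k m = 0" if "3 \<le> k" for k
    using fil_pow[OF f, of k] lt that unfolding fil_def by (meson le_trans mult_le_mono1)
  have sum: "gm_neg f m = (\<Sum>k\<in>{1..min (mdeg m) 2}. (- 1) ^ k * ps_pow f k m)"
    unfolding gm_neg_def using high by (intro sum.mono_neutral_right) auto
  have deg0: "f m = 0" if "mdeg m = 0" using f that \<open>0 < a\<close> unfolding fil_def by auto
  have deg1: "ps_mult f f m = 0" if "mdeg m \<le> 1"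
    using fil_mult[OF f f] that \<open>0 < a\<close> unfolding fil_def by fastforce
  consider "mdeg m = 0" | "mdeg m = 1" | "2 \<le> mdeg m" by linarith
  hence "gm_neg f m = ps_mult f f m - f m"
    using ps_mult_ps_one_right[OF fil_Suc_infinite_support[OF f[unfolded a]]]
    by cases (simp_all add: sum deg0 deg1 numeral_2_eq_2)
  thus False using ne by simp
qed

lemma gm_neg_linear:
  assumes f: "fil a f" and "0 < a" shows "fil (2 * a) (gm_neg f + f)"
proof -
  have "fil (2 * a) (gm_neg f - (ps_mult f f - f) + ps_mult f f)"
    using gm_neg_quadratic[OF assms] fil_mult[OF f f] by (intro fil_add) (auto elim: fil_mono)
  thus ?thesis by simp
qed

primrec cross_terms :: "('a::comm_ring_1) pser list \<Rightarrow> 'a pser" where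
  "cross_terms [] = 0"
| "cross_terms (t # ts) = ps_mult t (sum_list ts) + cross_terms ts"

lemma fil_cross_terms:
  fixes ts :: "('a::comm_ring_1) pser list"
  shows "(\<And>t. t \<in> set ts \<Longrightarrow> fil a t) \<Longrightarrow> fil (2 * a) (cross_terms ts)"
proof (induction ts)
  case (Cons t ts)
  have "fil (a + a) (ps_mult t (sum_list ts))" using Cons.prems by (intro fil_mult fil_sum_list) auto
  thus "fil (2 * a) (cross_terms (t # ts))" using Cons by (auto intro!: fil_add simp: mult_2)
qed simp

lemma fil_sum_list_diff:
  fixes ts ts' :: "('a::ab_group_add) pser list"
  shows "list_all2 (\<lambda>t t'. fil a (t - t')) ts ts' \<Longrightarrow> fil a (sum_list ts - sum_list ts')"
proof (induction rule: list_all2_induct)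
  case (Cons t ts t' ts')
  have "fil a ((t - t') + (sum_list ts - sum_list ts'))" using Cons by (intro fil_add)
  thus "fil a (sum_list (t # ts) - sum_list (t' # ts'))" by (simp add: algebra_simps)
qed (simp add: zero_fun_def[symmetric])

lemma fil_cross_terms_diff:
  fixes ts ts' :: "('a::comm_ring_1) pser list"
  assumes "list_all2 (\<lambda>t t'. fil (2 * a) (t - t')) ts ts'"
    and "\<And>t. t \<in> set ts \<Longrightarrow> fil a t" and "\<And>t. t \<in> set ts' \<Longrightarrow> fil a t"
  shows "fil (3 * a) (cross_terms ts - cross_terms ts')"
  using assms
proof (induction rule: list_all2_induct)
  case (Cons t ts t' ts')
  have "fil (a + 2 * a) (ps_mult t (sum_list ts - sum_list ts'))"
    using Cons by (intro fil_mult fil_sum_list_diff) auto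
  moreover have "fil (2 * a + a) (ps_mult (t - t') (sum_list ts'))"
    using Cons by (intro fil_mult fil_sum_list) auto
  moreover have "fil (3 * a) (cross_terms ts - cross_terms ts')"
    by (rule Cons.IH) (use Cons.prems in simp_all)
  ultimately have "fil (3 * a) (ps_mult t (sum_list ts - sum_list ts') + ps_mult (t - t') (sum_list ts')
      + (cross_terms ts - cross_terms ts'))"
    by (intro fil_add) (simp_all add: algebra_simps numeral_3_eq_3)
  thus "fil (3 * a) (cross_terms (t # ts) - cross_terms (t' # ts'))"
    by (simp add: ps_mult_diff_left ps_mult_diff_right algebra_simps)
qed simp

lemma fil_foldr_gm_add: "(\<And>t. t \<in> set ts \<Longrightarrow> fil a t) \<Longrightarrow> fil a (foldr gm_add ts 0)"
  by (induction ts) (auto intro: fil_gm_add)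

lemma in_vars_foldr_gm_add: "(\<And>t. t \<in> set ts \<Longrightarrow> in_vars n t) \<Longrightarrow> in_vars n (foldr gm_add ts 0)"
  by (induction ts) (simp_all add: in_vars_gm_add)

lemma foldr_gm_add_quadratic:
  fixes ts :: "('a::comm_ring_1) pser list"
  assumes "\<And>t. t \<in> set ts \<Longrightarrow> fil a t"
  shows "fil (3 * a) (foldr gm_add ts 0 - (sum_list ts + cross_terms ts))"
  using assms
proof (induction ts)
  case (Cons t ts)
  let ?R = "foldr gm_add ts 0"
  have IH: "fil (3 * a) (?R - (sum_list ts + cross_terms ts))" by (rule Cons.IH) (use Cons.prems in simp)
  have "fil (2 * a) (?R - (sum_list ts + cross_terms ts) + cross_terms ts)"
    using Cons.prems by (intro fil_add fil_mono[OF IH] fil_cross_terms) auto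
  hence "fil (a + 2 * a) (ps_mult t (?R - sum_list ts))"
    using Cons.prems by (intro fil_mult) (simp_all add: algebra_simps)
  hence "fil (3 * a) (?R - (sum_list ts + cross_terms ts) + ps_mult t (?R - sum_list ts))"
    using IH by (intro fil_add) (simp_all add: numeral_3_eq_3)
  thus "fil (3 * a) (foldr gm_add (t # ts) 0 - (sum_list (t # ts) + cross_terms (t # ts)))"
    by (simp add: gm_add_eq ps_mult_diff_right algebra_simps)
qed simp

lemma foldr_gm_add_linear:
  fixes ts :: "('a::comm_ring_1) pser list"
  assumes "\<And>t. t \<in> set ts \<Longrightarrow> fil a t"
  shows "fil (2 * a) (foldr gm_add ts 0 - sum_list ts)"
proof -
  have "fil (2 * a) (foldr gm_add ts 0 - (sum_list ts + cross_terms ts) + cross_terms ts)"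
    by (intro fil_add fil_mono[OF foldr_gm_add_quadratic[OF assms]] fil_cross_terms assms) auto
  thus ?thesis by (simp add: algebra_simps)
qed

lemma gm_add_solvable:
  fixes D y :: "('a::comm_ring_1) pser"
  assumes y: "fil (Suc b) y" and diff: "fil t (D - y)" and D: "in_vars n D" and "in_vars n y"
  shows "\<exists>u. fil t u \<and> in_vars n u \<and> D = gm_add y u"
proof -
  define \<Phi> where "\<Phi> g = D - y - ps_mult y g" for g
  have mult_y: "fil (Suc k) (ps_mult y g)" if "fil k g" for k g
    using fil_mult[OF y that] by (rule fil_mono) simp
  have contr: "fil (Suc k) (\<Phi> g - \<Phi> h)" if "fil k (g - h)" for g h k
  proof -
    have "\<Phi> g - \<Phi> h = - ps_mult y (g - h)" by (simp add: \<Phi>_def ps_mult_diff_right)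
    thus ?thesis using mult_y[OF that] by (simp add: fil_uminus)
  qed
  define S where "S = {m. t \<le> mdeg m \<and> (\<forall>k\<ge>n. m k = 0)}"
  have supp: "(\<forall>m. g m \<noteq> 0 \<longrightarrow> m \<in> S) \<longleftrightarrow> fil t g \<and> in_vars n g" for g :: "'a pser"
    by (auto simp: S_def fil_def in_vars_def)
  have closed: "\<forall>m. \<Phi> g m \<noteq> 0 \<longrightarrow> m \<in> S" if "\<forall>m. g m \<noteq> 0 \<longrightarrow> m \<in> S" for g
    unfolding supp
  proof
    have "fil t g" "in_vars n g" using that supp by blast+
    have "fil t (ps_mult y g)" using mult_y[OF \<open>fil t g\<close>] by (rule fil_mono) simp
    thus "fil t (\<Phi> g)" unfolding \<Phi>_def by (rule fil_diff[OF diff])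
    show "in_vars n (\<Phi> g)" unfolding \<Phi>_def using assms(3,4) \<open>in_vars n g\<close> by (intro in_vars_diff in_vars_mult)
  qed
  obtain u where "\<Phi> u = u" "\<forall>m. u m \<noteq> 0 \<longrightarrow> m \<in> S"
    using fil_contraction_fixpoint[of \<Phi> S, OF contr closed] by blast
  hence "\<Phi> u = u" "fil t u" "in_vars n u" using supp by blast+
  hence "D = u + (y + ps_mult y u)" by (simp add: \<Phi>_def diff_diff_eq diff_eq_eq)
  thus ?thesis using \<open>fil t u\<close> \<open>in_vars n u\<close> by (auto simp: gm_add_eq ac_simps)
qed

section \<open>Faces and coboundaries\<close>

lemma face_add: "face n i (f + g) = face n i f + face n i g"
  by (simp add: face_def fun_eq_iff distrib_left)

lemma face_zero: "face n i 0 = 0"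
  by (simp add: face_def fun_eq_iff)

text \<open>Face \<open>j + 1\<close> substitutes \<open>x\<^sub>j + x\<^sub>j\<^sub>+\<^sub>1\<close> for \<open>x\<^sub>j\<close>; on exponents this merges positions
  \<open>j\<close> and \<open>j + 1\<close>.\<close>
definition merge_at :: "nat \<Rightarrow> mono \<Rightarrow> mono" where
  "merge_at j m = (\<lambda>k. if k < j then m k else if k = j then m j + m (Suc j) else m (Suc k))"

lemma face_middle:
  "0 < i \<Longrightarrow> i \<le> n \<Longrightarrow> face n i f m = of_nat ((m (i - 1) + m i) choose m i) * f (merge_at (i - 1) m)"
  by (cases i) (simp_all add: face_def merge_at_def cong: if_cong)

lemma sum_merge_at: "j < n \<Longrightarrow> sum (merge_at j m) {..<n} = sum m {..<Suc n}"
proof (induction n)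
  case (Suc n)
  show ?case
  proof (cases "j < n")
    case True thus ?thesis using Suc by (simp add: merge_at_def)
  next
    case False
    hence "j = n" using Suc by simp
    moreover have "sum (merge_at j m) {..<n} = sum m {..<n}" if "j = n"
      using that by (intro sum.cong) (auto simp: merge_at_def)
    ultimately show ?thesis by (simp add: merge_at_def add.assoc)
  qed
qed simp

lemma face_nonzeroE:
  assumes "face n i f m \<noteq> 0" "in_vars n f"
  obtains m' where "f m' \<noteq> 0" "mdeg m' = mdeg m" "\<And>k. Suc n \<le> k \<Longrightarrow> m k = 0"
proof -
  have f: "\<And>m k. f m \<noteq> 0 \<Longrightarrow> n \<le> k \<Longrightarrow> m k = 0" using assms(2) by (simp add: in_vars_def)
  consider "i = 0" | "0 < i" "i \<le> n" | "n < i" by linarith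
  thus thesis
  proof cases
    case 1
    hence m0: "m 0 = 0" and fm: "f (\<lambda>k. m (Suc k)) \<noteq> 0"
      using assms(1) by (auto simp: face_def split: if_splits)
    have high: "m k = 0" if "Suc n \<le> k" for k
      using f[OF fm, of "k - 1"] that by (cases k) auto
    have "mdeg m = sum m {..<Suc n}" using high by (intro mdeg_lessThan) auto
    also have "\<dots> = sum (\<lambda>k. m (Suc k)) {..<n}" unfolding sum.lessThan_Suc_shift using m0 by simp
    also have "\<dots> = mdeg (\<lambda>k. m (Suc k))" by (rule mdeg_lessThan[symmetric]) (simp add: f[OF fm])
    finally show thesis using fm high by (intro that) auto
  next
    case 2
    hence fm: "f (merge_at (i - 1) m) \<noteq> 0" using assms(1) by (auto simp: face_middle)
    have high: "m k = 0" if "Suc n \<le> k" for k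
      using f[OF fm, of "k - 1"] 2 that by (cases k) (auto simp: merge_at_def split: if_splits)
    have "mdeg m = sum m {..<Suc n}" using high by (intro mdeg_lessThan) auto
    also have "\<dots> = sum (merge_at (i - 1) m) {..<n}" using 2 by (simp add: sum_merge_at)
    also have "\<dots> = mdeg (merge_at (i - 1) m)" by (rule mdeg_lessThan[symmetric], rule f[OF fm])
    finally show thesis using fm high by (intro that) auto
  next
    case 3
    hence "f m \<noteq> 0" using assms(1) by (auto simp: face_def split: if_splits)
    thus thesis using f by (intro that) auto
  qed
qed

lemma in_vars_face: "in_vars n f \<Longrightarrow> in_vars (Suc n) (face n i f)"
  unfolding in_vars_def[of "Suc n"] by (metis face_nonzeroE)

lemma fil_face: "in_vars n f \<Longrightarrow> fil a f \<Longrightarrow> fil a (face n i f)"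
  unfolding fil_def[of a "face n i f"] by (metis face_nonzeroE fil_def)

definition cob_terms :: "nat \<Rightarrow> ('a::comm_ring_1) pser \<Rightarrow> 'a pser list" where
  "cob_terms n f = map (\<lambda>i. if even i then face n i f else gm_neg (face n i f)) [0..<n + 2]"

lemma cob_eq_foldr: "cob n f = foldr gm_add (cob_terms n f) 0"
  by (simp add: cob_def cob_terms_def zero_fun_def)

lemma fil_cob: "in_vars n f \<Longrightarrow> fil a f \<Longrightarrow> fil a (cob n f)"
  unfolding cob_eq_foldr by (rule fil_foldr_gm_add) (auto simp: cob_terms_def fil_face fil_gm_neg)

lemma in_vars_cob: "in_vars n f \<Longrightarrow> in_vars (Suc n) (cob n f)"
  unfolding cob_eq_foldr
  by (rule in_vars_foldr_gm_add) (auto simp: cob_terms_def in_vars_face in_vars_gm_neg)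

lemma cob_zero: "cob n 0 = 0"
proof -
  have "ps_pow (0 :: 'a pser) k = 0" if "1 \<le> k" for k using that by (cases k) auto
  hence "gm_neg (0 :: 'a pser) = 0" unfolding gm_neg_def by (simp add: fun_eq_iff)
  hence "\<forall>t \<in> set (cob_terms n (0 :: 'a pser)). t = 0" by (auto simp: cob_terms_def face_zero)
  moreover have "foldr gm_add ts 0 = 0" if "\<forall>t \<in> set ts. t = 0" for ts :: "'a pser list"
    using that by (induction ts) (simp_all add: gm_add_eq)
  ultimately show ?thesis by (simp add: cob_eq_foldr)
qed

text \<open>The coboundary of \<open>A\<^sup>*(G\<^sub>a; G\<^sub>a)\<close>, whose cohomology is the \<open>E\<^sub>1\<close>-term.\<close>
definition cob_Ga :: "nat \<Rightarrow> ('a::comm_ring_1) pser \<Rightarrow> 'a pser" where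
  "cob_Ga n f = (\<Sum>i\<leftarrow>[0..<n + 2]. if even i then face n i f else - face n i f)"

lemma cob_Ga_add: "cob_Ga n (f + g) = cob_Ga n f + cob_Ga n g"
proof -
  have "map (\<lambda>i. if even i then face n i (f + g) else - face n i (f + g)) [0..<n + 2]
      = map (\<lambda>i. (if even i then face n i f else - face n i f) + (if even i then face n i g else - face n i g))
          [0..<n + 2]"
    by (simp add: face_add)
  thus ?thesis by (simp only: cob_Ga_def sum_list_addf)
qed

lemma list_all2_map_same: "list_all2 P (map f xs) (map g xs) \<longleftrightarrow> (\<forall>x\<in>set xs. P (f x) (g x))"
  by (simp add: list_all2_map1 list_all2_map2 list_all2_same)

lemma cob_linear_approx:
  assumes "in_vars n f" "fil a f" "0 < a"
  shows "fil (2 * a) (cob n f - cob_Ga n f)"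
proof -
  have faces: "fil a (face n i f)" for i using assms(1,2) by (rule fil_face)
  have "fil (2 * a) (cob n f - sum_list (cob_terms n f))"
    unfolding cob_eq_foldr by (rule foldr_gm_add_linear) (auto simp: cob_terms_def faces fil_gm_neg)
  moreover have "fil (2 * a) (sum_list (cob_terms n f) - cob_Ga n f)"
    unfolding cob_terms_def cob_Ga_def
    by (rule fil_sum_list_diff) (unfold list_all2_map_same, auto simp: gm_neg_linear[OF faces \<open>0 < a\<close>])
  ultimately have "fil (2 * a) (cob n f - sum_list (cob_terms n f) + (sum_list (cob_terms n f) - cob_Ga n f))"
    by (rule fil_add)
  thus ?thesis by simp
qed

lemma cob_quadratic_approx:
  assumes "in_vars n f" "fil a f" "0 < a"
  defines "alt \<equiv> map (\<lambda>i. if even i then face n i f else - face n i f) [0..<n + 2]"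
  shows "fil (3 * a) (cob n f - (cob_Ga n f
    + (\<Sum>i\<leftarrow>[0..<n + 2]. if even i then 0 else ps_mult (face n i f) (face n i f))
    + cross_terms alt))"
proof -
  have faces: "fil a (face n i f)" for i using assms(1,2) by (rule fil_face)
  let ?quad = "\<lambda>i. if even i then face n i f else ps_mult (face n i f) (face n i f) - face n i f"
  have terms: "\<And>t. t \<in> set (cob_terms n f) \<Longrightarrow> fil a t"
    by (auto simp: cob_terms_def faces fil_gm_neg)
  have approx: "fil (3 * a) (cob n f - (sum_list (cob_terms n f) + cross_terms (cob_terms n f)))"
    unfolding cob_eq_foldr by (rule foldr_gm_add_quadratic[OF terms])
  have linear: "fil (3 * a) (sum_list (cob_terms n f) - (\<Sum>i\<leftarrow>[0..<n + 2]. ?quad i))"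
    unfolding cob_terms_def
    by (rule fil_sum_list_diff) (unfold list_all2_map_same, auto simp: gm_neg_quadratic[OF faces \<open>0 < a\<close>])
  have cross: "fil (3 * a) (cross_terms (cob_terms n f) - cross_terms alt)"
    unfolding cob_terms_def alt_def
    by (rule fil_cross_terms_diff)
      (unfold list_all2_map_same, auto simp: gm_neg_linear[OF faces \<open>0 < a\<close>] faces fil_gm_neg fil_uminus)
  have quad: "(\<Sum>i\<leftarrow>[0..<n + 2]. ?quad i) = cob_Ga n f
      + (\<Sum>i\<leftarrow>[0..<n + 2]. if even i then 0 else ps_mult (face n i f) (face n i f))"
    unfolding cob_Ga_def sum_list_addf[symmetric] by (rule arg_cong[where f = sum_list]) auto
  have "fil (3 * a) ((cob n f - (sum_list (cob_terms n f) + cross_terms (cob_terms n f)))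
      + (sum_list (cob_terms n f) - (\<Sum>i\<leftarrow>[0..<n + 2]. ?quad i))
      + (cross_terms (cob_terms n f) - cross_terms alt))"
    by (intro fil_add approx linear cross)
  thus ?thesis by (simp only: quad) (simp add: algebra_simps)
qed

lemma tss_d_intro:
  fixes x y :: "('a::comm_ring_1) pser"
  assumes x: "in_vars n x" "homogeneous s x" and y: "in_vars (Suc n) y" "homogeneous (s + r) y"
    and "0 < s" "0 < r"
    and cob_x: "fil (s + 2 * r) (cob n x - y)" and cob_y: "fil (s + 2 * r) (cob (Suc n) y)"
  shows "tss_d n r s x y"
proof -
  have fil_y: "fil (Suc (s + r - 1)) y" using y(2) \<open>0 < s\<close> by (simp add: fil_homogeneous)
  obtain u where u: "fil (s + 2 * r) u" "in_vars (Suc n) u" and eq: "cob n x = gm_add y u"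
    using gm_add_solvable[OF fil_y cob_x in_vars_cob[OF x(1)] y(1)] by blast
  have vanish: "f (\<lambda>_. 0) = 0" if "fil (Suc k) f" for f :: "'a pser" and k
    using fil_imp_zero[of "\<lambda>_. 0" f] fil_mono[OF that] by (simp add: mdeg_def)
  have "Zr n r s x"
  proof -
    have "fil (s + r) (cob n x - y + y)"
      using fil_mono[OF cob_x] fil_homogeneous[OF y(2)] by (intro fil_add) auto
    thus ?thesis using x \<open>0 < s\<close> vanish[of "s - 1" x]
      by (simp add: Zr_def cochain_def fil_homogeneous)
  qed
  moreover have "Zr (Suc n) r (s + r) y"
    using y cob_y \<open>0 < s\<close> vanish[of "s + r - 1" y]
    by (simp add: Zr_def cochain_def fil_homogeneous mult_2 add.assoc)
  moreover have "Zr (Suc n) (r - 1) (s + r + 1) u"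
    using u fil_cob[OF u(2,1)] \<open>0 < r\<close> vanish[of "s + 2 * r - 1" u]
    by (auto simp: Zr_def cochain_def elim: fil_mono)
  moreover have "Zr n (r - 1) (s + 1) 0"
    by (simp add: Zr_def cochain_def cob_zero)
  moreover have "cob n x = gm_add y (gm_add u (cob n 0))"
    by (simp add: eq cob_zero gm_add_eq)
  ultimately show ?thesis
    unfolding tss_d_def using hcomp_homogeneous[OF x(2)] hcomp_homogeneous[OF y(2)] by blast
qed

section \<open>Monomials over \<open>F\<^sub>2\<close>\<close>

definition ps_monom :: "'a::zero \<Rightarrow> mono \<Rightarrow> 'a pser" where
  "ps_monom c \<mu> = (\<lambda>m. if m = \<mu> then c else 0)"

definition mono_of_list :: "nat list \<Rightarrow> mono" where
  "mono_of_list e = (\<lambda>k. if k < length e then e ! k else 0)"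

lemma monom_eq_ps_monom: "monom c e = ps_monom c (mono_of_list e)"
  by (simp add: monom_def ps_monom_def mono_of_list_def)

lemma finite_support_mono_of_list: "finite_support (mono_of_list l)"
  unfolding finite_support_def mono_of_list_def by (rule finite_subset[of _ "{..<length l}"]) auto

lemma mdeg_mono_of_list: "mdeg (mono_of_list l) = sum_list l"
proof -
  have "mdeg (mono_of_list l) = (\<Sum>k<length l. l ! k)"
    by (subst mdeg_lessThan[of "length l"]) (auto simp: mono_of_list_def)
  thus ?thesis by (simp add: sum_list_sum_nth atLeast0LessThan)
qed

lemma homogeneous_monom: "sum_list l = d \<Longrightarrow> homogeneous d (monom c l)"
  by (simp add: homogeneous_def monom_eq_ps_monom ps_monom_def mdeg_mono_of_list)

lemma in_vars_monom: "length l \<le> n \<Longrightarrow> in_vars n (monom c l)"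
  by (simp add: in_vars_def monom_def)

lemma ps_mult_ps_monom:
  assumes "finite_support \<mu>" "finite_support \<nu>"
  shows "ps_mult (ps_monom a \<mu>) (ps_monom b \<nu>) = ps_monom (a * b) (\<mu> + \<nu>)"
proof
  fix m
  have "ps_monom a \<mu> p * ps_monom b \<nu> (\<lambda>k. m k - p k) = (if p = \<mu> \<and> m = \<mu> + \<nu> then a * b else 0)"
    if "\<forall>k. p k \<le> m k" for p
    using that by (auto simp: ps_monom_def fun_eq_iff) (metis le_add_diff_inverse)
  hence "ps_mult (ps_monom a \<mu>) (ps_monom b \<nu>) m
      = (\<Sum>p\<in>{p. \<forall>k. p k \<le> m k}. if p = \<mu> \<and> m = \<mu> + \<nu> then a * b else 0)"
    unfolding ps_mult_def by (intro sum.cong) auto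
  also have "\<dots> = ps_monom (a * b) (\<mu> + \<nu>) m"
  proof (cases "m = \<mu> + \<nu>")
    case True
    hence "finite {p :: mono. \<forall>k. p k \<le> m k}"
      using assms by (simp add: finite_dominated_monos_iff finite_support_def Collect_disj_eq
          finite_subset[of "{k. \<mu> k + \<nu> k \<noteq> 0}" "{k. \<mu> k \<noteq> 0} \<union> {k. \<nu> k \<noteq> 0}"])
    thus ?thesis using True by (simp add: ps_monom_def if_distrib cong: conj_cong)
  qed (simp add: ps_monom_def)
  finally show "ps_mult (ps_monom a \<mu>) (ps_monom b \<nu>) m = ps_monom (a * b) (\<mu> + \<nu>) m" .
qed

lemma mono_of_list_add:
  "length l = length l' \<Longrightarrow> mono_of_list l + mono_of_list l' = mono_of_list (map2 (+) l l')"
  by (simp add: mono_of_list_def fun_eq_iff)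

lemma ps_mult_monom:
  "length l = length l' \<Longrightarrow> ps_mult (monom a l) (monom b l') = monom (a * b) (map2 (+) l l')"
  by (simp add: monom_eq_ps_monom ps_mult_ps_monom finite_support_mono_of_list mono_of_list_add)

lemma ps_mult_monom3:
  "ps_mult (monom a [x1, x2, x3]) (monom b [y1, y2, y3]) = monom (a * b) [x1 + y1, x2 + y2, x3 + y3]"
  by (simp add: ps_mult_monom)

definition insert_zero_at :: "nat \<Rightarrow> mono \<Rightarrow> mono" where
  "insert_zero_at j \<mu> = (\<lambda>k. if k < j then \<mu> k else if k = j then 0 else \<mu> (k - 1))"

lemma merge_at_insert_zero_at:
  "merge_at j (insert_zero_at j \<mu>) = \<mu>" "merge_at j (insert_zero_at (Suc j) \<mu>) = \<mu>"
  by (auto simp: merge_at_def insert_zero_at_def fun_eq_iff)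

lemma merge_at_inj: "merge_at j m = merge_at j m' \<Longrightarrow> m (Suc j) = m' (Suc j) \<Longrightarrow> m = m'"
proof
  fix k assume eq: "merge_at j m = merge_at j m'" and "m (Suc j) = m' (Suc j)"
  hence "merge_at j m k' = merge_at j m' k'" for k' by simp
  from this[of k] this[of j] this[of "k - 1"] \<open>m (Suc j) = m' (Suc j)\<close> show "m k = m' k"
    by (cases k "Suc j" rule: linorder_cases; cases "k = j") (auto simp: merge_at_def split: if_splits)
qed

lemma face_first_ps_monom: "face n 0 (ps_monom c \<mu>) = ps_monom c (insert_zero_at 0 \<mu>)"
proof
  fix m
  have "m = insert_zero_at 0 \<mu> \<longleftrightarrow> m 0 = 0 \<and> (\<lambda>k. m (Suc k)) = \<mu>"
    by (auto simp: insert_zero_at_def fun_eq_iff) (metis Suc_pred)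
  thus "face n 0 (ps_monom c \<mu>) m = ps_monom c (insert_zero_at 0 \<mu>) m"
    by (auto simp: face_def ps_monom_def)
qed

lemma face_last_ps_monom:
  "(\<And>k. n \<le> k \<Longrightarrow> \<mu> k = 0) \<Longrightarrow> face n (Suc n) (ps_monom c \<mu>) = ps_monom c (insert_zero_at n \<mu>)"
  by (auto simp: face_def ps_monom_def insert_zero_at_def fun_eq_iff)

lemma of_nat_choose_pow2_bit:
  assumes "t \<le> 2 ^ a"
  shows "(of_nat (2 ^ a choose t) :: bit) = (if t = 0 \<or> t = 2 ^ a then 1 else 0)"
proof (cases "t = 0 \<or> t = 2 ^ a")
  case False
  hence t: "0 < t" "t < 2 ^ a" using assms by auto
  have "t * (2 ^ a choose t) = 2 ^ a * (2 ^ a - 1 choose (t - 1))"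
    using times_binomial_minus1_eq[OF t(1)] .
  moreover have "coprime ((2::nat) ^ a) (2 ^ a choose t)" if "odd (2 ^ a choose t)"
    using that by (simp add: coprime_commute)
  ultimately have "(2::nat) ^ a dvd t" if "odd (2 ^ a choose t)"
    using that by (metis coprime_dvd_mult_left_iff dvd_triv_left)
  hence "even (2 ^ a choose t)" using t by (meson dvd_imp_le leD)
  moreover have "(of_nat k :: bit) = (if even k then 0 else 1)" for k by (induction k) auto
  ultimately show ?thesis using False by simp
qed auto

lemma face_middle_ps_monom_bit:
  fixes c :: bit
  assumes "0 < i" "i \<le> n" "\<mu> (i - 1) = 2 ^ a"
  shows "face n i (ps_monom c \<mu>) = ps_monom c (insert_zero_at (i - 1) \<mu>) + ps_monom c (insert_zero_at i \<mu>)"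
proof -
  obtain j where i: "i = Suc j" using assms(1) gr0_implies_Suc by blast
  let ?lo = "insert_zero_at j \<mu>" and ?hi = "insert_zero_at (Suc j) \<mu>"
  have "face n i (ps_monom c \<mu>) m = (ps_monom c ?lo + ps_monom c ?hi) m" for m
  proof (cases "merge_at j m = \<mu>")
    case False
    hence "m \<noteq> ?lo" "m \<noteq> ?hi" using merge_at_insert_zero_at by metis+
    thus ?thesis using assms False i by (simp add: face_middle ps_monom_def)
  next
    case True
    hence sum: "m j + m (Suc j) = 2 ^ a" using assms(3) i by (auto simp: merge_at_def)
    have "m = ?lo \<longleftrightarrow> m (Suc j) = ?lo (Suc j)" "m = ?hi \<longleftrightarrow> m (Suc j) = ?hi (Suc j)"
      using merge_at_inj[of j m] True merge_at_insert_zero_at by metis+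
    hence "m = ?lo \<longleftrightarrow> m (Suc j) = 2 ^ a" "m = ?hi \<longleftrightarrow> m (Suc j) = 0"
      using assms(3) i by (simp_all add: insert_zero_at_def)
    moreover have "m (Suc j) \<le> 2 ^ a" using sum by linarith
    ultimately show ?thesis
      using assms True i sum of_nat_choose_pow2_bit[of "m (Suc j)" a]
      by (auto simp: face_middle ps_monom_def)
  qed
  thus ?thesis using i by (simp add: fun_eq_iff)
qed

lemma mono_of_list_insert_zero:
  "j \<le> length l \<Longrightarrow> mono_of_list (take j l @ 0 # drop j l) = insert_zero_at j (mono_of_list l)"
  by (auto simp: mono_of_list_def insert_zero_at_def fun_eq_iff nth_append min_def
      split: nat_diff_split_asm)

lemma face_monom_bit:
  fixes c :: bit
  assumes "length l = n" "\<forall>e\<in>set l. \<exists>a. e = 2 ^ a" "i \<le> Suc n"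
  shows "face n i (monom c l) = (if i = 0 then 0 else monom c (take (i - 1) l @ 0 # drop (i - 1) l))
    + (if i \<le> n then monom c (take i l @ 0 # drop i l) else 0)"
proof -
  consider "i = 0" | "0 < i" "i \<le> n" | "i = Suc n" using assms(3) by linarith
  thus ?thesis
  proof cases
    case 1
    have "mono_of_list (0 # l) = insert_zero_at 0 (mono_of_list l)"
      using mono_of_list_insert_zero[of 0 l] by simp
    thus ?thesis using 1 by (simp add: monom_eq_ps_monom face_first_ps_monom)
  next
    case 2
    hence "l ! (i - 1) \<in> set l" using assms(1) by simp
    then obtain a where "l ! (i - 1) = 2 ^ a" using assms(2) by blast
    hence "mono_of_list l (i - 1) = 2 ^ a" using 2 assms(1) by (simp add: mono_of_list_def)
    thus ?thesis using 2 assms(1)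
      by (simp add: monom_eq_ps_monom face_middle_ps_monom_bit mono_of_list_insert_zero)
  next
    case 3
    have "mono_of_list (l @ [0]) = insert_zero_at n (mono_of_list l)"
      using mono_of_list_insert_zero[of n l] assms(1) by simp
    moreover have "\<And>k. n \<le> k \<Longrightarrow> mono_of_list l k = 0" using assms(1) by (simp add: mono_of_list_def)
    ultimately show ?thesis using 3 assms(1) by (simp add: monom_eq_ps_monom face_last_ps_monom)
  qed
qed

lemma bit_mult_self: "(c :: bit) * c = c"
  by (cases c) simp_all

lemma bit_pser_add_self: "(f :: bit pser) + f = 0"
proof
  fix m show "(f + f) m = 0 m" by (cases "f m") simp_all
qed

lemma bit_pser_add_self_left: "(f :: bit pser) + (f + g) = g"
  by (simp add: add.assoc[symmetric] bit_pser_add_self)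

lemma uminus_bit_pser: "- (f :: bit pser) = f"
  by (simp add: fun_eq_iff)

lemma cob_Ga_monom_pow2:
  fixes c :: bit
  assumes "length l = n" "\<forall>e\<in>set l. \<exists>a. e = 2 ^ a"
  shows "cob_Ga n (monom c l) = 0"
proof -
  define A where "A j = monom c (take j l @ 0 # drop j l)" for j
  have "cob_Ga n (monom c l) = (\<Sum>i<n + 2. (if i = 0 then 0 else A (i - 1)) + (if i \<le> n then A i else 0))"
    unfolding cob_Ga_def interv_sum_list_conv_sum_set_nat set_upt atLeast0LessThan uminus_bit_pser if_cancel
    using face_monom_bit[OF assms] by (intro sum.cong) (simp_all add: A_def)
  also have "\<dots> = (\<Sum>j<n + 1. A j) + (\<Sum>j<n + 1. A j)"
  proof -
    have n2: "n + 2 = Suc (n + 1)" by simp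
    have "(\<Sum>i<n + 2. if i = 0 then 0 else A (i - 1)) = (\<Sum>j<n + 1. A j)"
      unfolding n2 sum.lessThan_Suc_shift by simp
    moreover have "(\<Sum>i<n + 2. if i \<le> n then A i else 0) = (\<Sum>j<n + 1. A j)"
      unfolding n2 sum.lessThan_Suc by simp
    ultimately show ?thesis by (simp only: sum.distrib)
  qed
  also have "\<dots> = 0" by (rule bit_pser_add_self)
  finally show ?thesis .
qed

lemma cob_monom_pow2_pair_approx:
  fixes c :: bit
  assumes P: "P = 2 ^ a" and Q: "Q = 2 ^ b"
  shows "fil (3 * (P + Q)) (cob 2 (monom c [P, Q]) - (monom c [P, P, Q + Q] + monom c [P + P, Q, Q]))"
proof -
  let ?x = "monom c [P, Q]"
  have u: "[0..<2 + 2] = [0::nat, 1, 2, 3]" by (simp add: upt_rec)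
  have ev: "even (0::nat)" "odd (1::nat)" "even (2::nat)" "odd (3::nat)" by simp_all
  have faces: "face 2 0 ?x = monom c [0, P, Q]" "face 2 1 ?x = monom c [0, P, Q] + monom c [P, 0, Q]"
     "face 2 2 ?x = monom c [P, 0, Q] + monom c [P, Q, 0]" "face 2 3 ?x = monom c [P, Q, 0]"
    using P Q by (simp_all add: face_monom_bit)
  have cocycle: "cob_Ga 2 ?x = 0" using P Q by (intro cob_Ga_monom_pow2) auto
  have quadratic: "(\<Sum>i\<leftarrow>[0..<2 + 2]. if even i then 0 else ps_mult (face 2 i ?x) (face 2 i ?x))
      + cross_terms (map (\<lambda>i. if even i then face 2 i ?x else - face 2 i ?x) [0..<2 + 2])
      = monom c [P, P, Q + Q] + monom c [P + P, Q, Q]"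
    unfolding u
    by (simp only: list.map sum_list.Cons sum_list.Nil cross_terms.simps ev if_True if_False faces
        uminus_bit_pser ps_mult_add_left ps_mult_add_right ps_mult_zero_right ps_mult_monom3 bit_mult_self
        add_0 add_0_right ac_simps bit_pser_add_self bit_pser_add_self_left)
  have "fil (3 * (P + Q)) (cob 2 ?x - (cob_Ga 2 ?x
      + (\<Sum>i\<leftarrow>[0..<2 + 2]. if even i then 0 else ps_mult (face 2 i ?x) (face 2 i ?x))
      + cross_terms (map (\<lambda>i. if even i then face 2 i ?x else - face 2 i ?x) [0..<2 + 2])))"
    using P by (intro cob_quadratic_approx in_vars_monom fil_homogeneous homogeneous_monom) auto
  thus ?thesis by (simp only: cocycle add_0 quadratic)
qed

lemma fil_cob_pow2_pair_image:
  fixes c :: bit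
  assumes P: "P = 2 ^ a" and Q: "Q = 2 ^ b"
  shows "fil (4 * (P + Q)) (cob 3 (monom c [P, P, Q + Q] + monom c [P + P, Q, Q]))"
proof -
  let ?y = "monom c [P, P, Q + Q] + monom c [P + P, Q, Q]"
  have "\<exists>k. (2::nat) ^ m + 2 ^ m = 2 ^ k" for m by (metis mult_2 power_Suc)
  hence "\<forall>e\<in>set [P, P, Q + Q]. \<exists>k. e = 2 ^ k" "\<forall>e\<in>set [P + P, Q, Q]. \<exists>k. e = 2 ^ k"
    using P Q by auto
  hence "cob_Ga 3 ?y = 0" by (simp add: cob_Ga_add cob_Ga_monom_pow2)
  moreover have "homogeneous (2 * (P + Q)) ?y" by (intro homogeneous_add homogeneous_monom) simp_all
  hence "fil (2 * (2 * (P + Q))) (cob 3 ?y - cob_Ga 3 ?y)"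
    using P by (intro cob_linear_approx in_vars_add in_vars_monom fil_homogeneous) simp_all
  ultimately show ?thesis by simp
qed

theorem mainTheorem5:
  fixes i j :: nat and c :: bit
  assumes "i \<noteq> j"
  shows "tss_d 2 (2 ^ i + 2 ^ j) (2 ^ i + 2 ^ j)
           (monom c [2 ^ i, 2 ^ j])
           (\<lambda>m. monom (c ^ 2) [2 ^ i, 2 ^ i, 2 ^ (j + 1)] m
                - monom (c ^ 2) [2 ^ (i + 1), 2 ^ j, 2 ^ j] m)"
proof -
  let ?P = "2 ^ i :: nat" and ?Q = "2 ^ j :: nat"
  let ?y = "monom c [?P, ?P, ?Q + ?Q] + monom c [?P + ?P, ?Q, ?Q]"
  have y: "(\<lambda>m. monom (c ^ 2) [2 ^ i, 2 ^ i, 2 ^ (j + 1)] m - monom (c ^ 2) [2 ^ (i + 1), 2 ^ j, 2 ^ j] m) = ?y"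
    by (simp add: fun_eq_iff mult_2)
  show ?thesis unfolding y
  proof (rule tss_d_intro)
    show "in_vars 2 (monom c [?P, ?Q])" "in_vars (Suc 2) ?y"
      by (simp_all add: in_vars_monom in_vars_add)
    show "homogeneous (?P + ?Q) (monom c [?P, ?Q])" "homogeneous (?P + ?Q + (?P + ?Q)) ?y"
      by (intro homogeneous_add homogeneous_monom; simp)+
    have "?P + ?Q + 2 * (?P + ?Q) = 3 * (?P + ?Q)" by simp
    thus "fil (?P + ?Q + 2 * (?P + ?Q)) (cob 2 (monom c [?P, ?Q]) - ?y)"
      using cob_monom_pow2_pair_approx[of ?P i ?Q j c] by simp
    have "fil (3 * (?P + ?Q)) (cob 3 ?y)"
      by (rule fil_mono[OF fil_cob_pow2_pair_image[of ?P i ?Q j c]]) simp_all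
    thus "fil (?P + ?Q + 2 * (?P + ?Q)) (cob (Suc 2) ?y)"
      unfolding \<open>?P + ?Q + 2 * (?P + ?Q) = 3 * (?P + ?Q)\<close> by (simp add: numeral_3_eq_3)
  qed simp_all
qed

end
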